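(* Let $A\in\mathbb{R}^{m\times n}$, $X\in\mathbb{R}^{n\times r}$ and $Y\in\mathbb{R}^{m\times r}$ satisfy $AX=Y$, where $\|X\|_0=k$ and the columns of $Y$ are linearly independent. Let $Q$ be a matrix whose columns form a basis of the orthogonal complement $R(Y)^\perp\subset\mathbb{R}^m$ of the column space of $Y$. Suppose $A$ satisfies the restricted isometry condition $0\leq \delta^L_{2k-r+1}(A)<1$. Then $$k-r=\min_{I\subset\{1,\dots,n\},\ |I|\geq k}\operatorname{rank}\left(Q^*A_I\right),$$ and $$\operatorname{supp}X=\arg\min_{I\subset\{1,\dots,n\},\ |I|\geq k}\operatorname{rank}\left(Q^*A_I\right),$$ i.e. $\operatorname{supp}X$ is the index set attaining this minimum.
   Context: For a matrix $X\in\mathbb{R}^{n\times r}$ with rows $\mathbf{x}^1,\dots,\mathbf{x}^n$, $\operatorname{supp}X=\{1\le i\le n:\mathbf{x}^i\neq 0\}$ is the set of indices of nonzero rows and $\|X\|_0=|\operatorname{supp}X|$. For an index set $I\subset\{1,\dots,n\}$, $A_I$ denotes the submatrix of $A$ consisting of the columns indexed by $I$. $R(Y)$ denotes the column space (range) of $Y$, and $Q^*$ denotes the (conjugate) transpose of $Q$. The condition $0\leq\delta^L_{s}(A)<1$ means that there is a left RIP constant $\delta^L_s\in[0,1)$ with $(1-\delta^L_s)\|\mathbf{x}\|^2\leq\|A\mathbf{x}\|^2$ for all $\mathbf{x}\in\mathbb{R}^n$ with at most $s$ nonzero entries; here $s=2k-r+1$. *)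

theory Defs
  imports "Jordan_Normal_Form.DL_Rank_Submatrix"
begin

definition row_supp :: "real mat \<Rightarrow> nat set" where
  "row_supp X = {i. i < dim_row X \<and> row X i \<noteq> 0\<^sub>v (dim_col X)}"

definition vec_nnz :: "real vec \<Rightarrow> nat" where
  "vec_nnz x = card {i. i < dim_vec x \<and> x $ i \<noteq> 0}"

definition left_RIP :: "real mat \<Rightarrow> nat \<Rightarrow> real \<Rightarrow> bool" where
  "left_RIP A s \<delta> \<longleftrightarrow> 0 \<le> \<delta> \<and> \<delta> < 1 \<and>
     (\<forall>x \<in> carrier_vec (dim_col A). vec_nnz x \<le> s \<longrightarrow>
        (1 - \<delta>) * (x \<bullet> x) \<le> (A *\<^sub>v x) \<bullet> (A *\<^sub>v x))"

definition cols_sub :: "real mat \<Rightarrow> nat set \<Rightarrow> real mat" where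
  "cols_sub A I = submatrix A UNIV I"

end

(*
  Let P = Q\<^sup>T A.  Then P u = 0 says exactly that A u lies in R(Y) = R(A X),
  and the left RIP makes A injective on (2k - r + 1)-sparse vectors.  On I = supp X the
  vectors u supported on I with A u \<in> R(Y) are exactly X c, an r-dimensional space, so
  rank (Q\<^sup>T A\<^sub>I) = k - r.  For any other I with |I| \<ge> k, a rank of at most k - r leaves
  room, inside some J \<subseteq> I of size k or k + 1, for a nonzero u with P u = 0 that also meets
  r - 1 or r further linear conditions on the coordinates c of A u = A X c; comparing the
  sparse vectors u and X c through the RIP then forces u = 0.
*)

theory Submission
  imports Defs
begin

definition supported_on :: "'a :: zero vec \<Rightarrow> nat set \<Rightarrow> bool" where
  "supported_on u J \<longleftrightarrow> (\<forall>i < dim_vec u. i \<notin> J \<longrightarrow> u $ i = 0)"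

lemma supported_on_mono: "supported_on u J \<Longrightarrow> J \<subseteq> K \<Longrightarrow> supported_on u K"
  unfolding supported_on_def by blast

lemma supported_on_Diff:
  assumes "supported_on v S" "\<And>a. a \<in> F \<Longrightarrow> v $ a = 0"
  shows "supported_on v (S - F)"
  using assms unfolding supported_on_def by blast

lemma supported_on_Int: "supported_on u J \<Longrightarrow> supported_on u K \<Longrightarrow> supported_on u (J \<inter> K)"
  unfolding supported_on_def by blast

lemma supported_on_empty: "u \<in> carrier_vec N \<Longrightarrow> supported_on u {} \<Longrightarrow> u = 0\<^sub>v N"
  unfolding supported_on_def by (intro eq_vecI) auto

lemma supported_on_minus:
  fixes u v :: "'a :: ab_group_add vec"
  assumes "u \<in> carrier_vec N" "v \<in> carrier_vec N" "supported_on u J" "supported_on v K"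
  shows "supported_on (u - v) (J \<union> K)"
  using assms unfolding supported_on_def by auto

lemma mult_mat_vec_zero_vec [simp]: "A \<in> carrier_mat nr nc \<Longrightarrow> A *\<^sub>v 0\<^sub>v nc = 0\<^sub>v nr"
  by (intro eq_vecI) auto

lemma minus_vec_eq_0_imp_eq:
  assumes "(v :: 'a :: ab_group_add vec) \<in> carrier_vec n" "w \<in> carrier_vec n" "v - w = 0\<^sub>v n"
  shows "v = w"
proof (rule eq_vecI)
  fix i assume i: "i < dim_vec w"
  have "v $ i - w $ i = (v - w) $ i" using assms(1,2) i by simp
  also have "\<dots> = 0" using assms i by simp
  finally show "v $ i = w $ i" by simp
qed (use assms in simp)

lemma vec_nnz_le_card_support:
  assumes "supported_on u J" "finite J"
  shows "vec_nnz u \<le> card J"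
  unfolding vec_nnz_def by (rule card_mono, insert assms, auto simp: supported_on_def)

lemma scalar_prod_self_eq_0_iff:
  "(v :: real vec) \<in> carrier_vec n \<Longrightarrow> v \<bullet> v = 0 \<longleftrightarrow> v = 0\<^sub>v n"
  using conjugate_square_eq_0_vec[of v n] by simp

lemma left_RIP_sparse_kernel:
  assumes RIP: "left_RIP A s \<delta>" and z: "z \<in> carrier_vec (dim_col A)"
    and Az: "A *\<^sub>v z = 0\<^sub>v (dim_row A)" and nnz: "vec_nnz z \<le> s"
  shows "z = 0\<^sub>v (dim_col A)"
proof -
  have "(1 - \<delta>) * (z \<bullet> z) \<le> 0" using RIP z nnz Az unfolding left_RIP_def by auto
  moreover have "\<delta> < 1" "0 \<le> z \<bullet> z"
    using RIP conjugate_square_ge_0_vec[of z] unfolding left_RIP_def by auto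
  ultimately have "z \<bullet> z = 0" by (simp add: mult_le_0_iff)
  then show ?thesis using scalar_prod_self_eq_0_iff[OF z] by simp
qed

lemma mult_append_rows_eq_0_iff:
  assumes A: "A \<in> carrier_mat nr1 nc" and B: "B \<in> carrier_mat nr2 nc" and v: "v \<in> carrier_vec nc"
  shows "(A @\<^sub>r B) *\<^sub>v v = 0\<^sub>v (nr1 + nr2) \<longleftrightarrow> A *\<^sub>v v = 0\<^sub>v nr1 \<and> B *\<^sub>v v = 0\<^sub>v nr2"
proof -
  have "0\<^sub>v (nr1 + nr2) = 0\<^sub>v nr1 @\<^sub>v (0\<^sub>v nr2 :: 'a vec)" by (intro eq_vecI) auto
  moreover have "A *\<^sub>v v \<in> carrier_vec nr1" using A v by simp
  ultimately show ?thesis using mat_mult_append[OF A B v] append_vec_eq by simp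
qed

lemma submatrix_rows_carrier:
  assumes "M \<in> carrier_mat nr nc" "F \<subseteq> {..<nr}"
  shows "submatrix M F UNIV \<in> carrier_mat (card F) nc"
proof -
  have "{i. i < nr \<and> i \<in> F} = F" using assms(2) by auto
  then show ?thesis using assms(1) by (intro carrier_matI) (auto simp: dim_submatrix)
qed

lemma submatrix_rows_mult_vec_eq_0:
  assumes M: "M \<in> carrier_mat nr nc" and F: "F \<subseteq> {..<nr}" and u: "u \<in> carrier_vec nc"
    and MFu: "submatrix M F UNIV *\<^sub>v u = 0\<^sub>v (card F)" and a: "a \<in> F"
  shows "(M *\<^sub>v u) $ a = 0"
proof -
  define j where "j = card {b \<in> F. b < a}"
  have "finite F" using F finite_subset by blast
  then have j: "j < card F" unfolding j_def using a by (intro psubset_card_mono) auto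
  have "{i. i < dim_row M \<and> i \<in> F} = F" using F M by auto
  then have "row (submatrix M F UNIV) j = row M a"
    using row_submatrix_UNIV[of j M F] j pick_card_in_set[OF a] unfolding j_def by simp
  then have "(M *\<^sub>v u) $ a = (submatrix M F UNIV *\<^sub>v u) $ j"
    using submatrix_rows_carrier[OF M F] M F a j by auto
  then show ?thesis using MFu j by simp
qed

lemma wide_mat_nonzero_kernel_vec:
  fixes W :: "'a :: field mat"
  assumes W: "W \<in> carrier_mat t N" and tN: "t < N"
  obtains u where "u \<in> carrier_vec N" "u \<noteq> 0\<^sub>v N" "W *\<^sub>v u = 0\<^sub>v t"
proof -
  define M where "M = mat N N (\<lambda>(i, j). if i < t then W $$ (i, j) else 0)"
  have M: "M \<in> carrier_mat N N" unfolding M_def by simp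
  have "M = mat\<^sub>r N N (\<lambda>i. if i = N - 1 then 0\<^sub>v N else row M i)"
    using tN by (intro eq_matI) (auto simp: M_def)
  moreover have "row M \<in> {0..<N} \<rightarrow> carrier_vec N" using M by auto
  ultimately have "det M = 0" using det_row_0[of "N - 1" N "row M"] tN by simp
  then obtain u where u: "u \<in> carrier_vec N" "u \<noteq> 0\<^sub>v N" "M *\<^sub>v u = 0\<^sub>v N"
    using det_0_iff_vec_prod_zero_field[OF M] by auto
  have "W *\<^sub>v u = 0\<^sub>v t"
  proof (rule eq_vecI)
    fix i assume "i < dim_vec (0\<^sub>v t)"
    then have i: "i < t" by simp
    have "row W i = row M i" using i tN W by (intro eq_vecI) (auto simp: M_def)
    then have "(W *\<^sub>v u) $ i = (M *\<^sub>v u) $ i" using i tN W M by simp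
    then show "(W *\<^sub>v u) $ i = 0\<^sub>v t $ i" using u(3) i tN by simp
  qed (use W in simp)
  then show thesis using that u by blast
qed

lemma wide_mat_nonzero_supported_kernel_vec:
  fixes W :: "'a :: field mat"
  assumes W: "W \<in> carrier_mat t N" and J: "J \<subseteq> {..<N}" and tJ: "t < card J"
  obtains u where "u \<in> carrier_vec N" "u \<noteq> 0\<^sub>v N" "supported_on u J" "W *\<^sub>v u = 0\<^sub>v t"
proof -
  define K where "K = {..<N} - J"
  define D :: "'a mat" where "D = submatrix (1\<^sub>m N) K UNIV"
  have K: "K \<subseteq> {..<N}" "card K = N - card J"
    unfolding K_def using J by (auto simp: card_Diff_subset finite_subset)
  have D: "D \<in> carrier_mat (N - card J) N"
    unfolding D_def using submatrix_rows_carrier[OF one_carrier_mat K(1)] K(2) by simp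
  have "card J \<le> N" using card_mono[OF _ J] by simp
  then have "t + (N - card J) < N" using tJ by simp
  then obtain u where u: "u \<in> carrier_vec N" "u \<noteq> 0\<^sub>v N" "(W @\<^sub>r D) *\<^sub>v u = 0\<^sub>v (t + (N - card J))"
    using wide_mat_nonzero_kernel_vec[OF carrier_append_rows[OF W D]] by blast
  then have Wu: "W *\<^sub>v u = 0\<^sub>v t" and Du: "D *\<^sub>v u = 0\<^sub>v (card K)"
    using mult_append_rows_eq_0_iff[OF W D u(1)] K(2) by auto
  have "supported_on u J"
    unfolding supported_on_def
  proof (intro allI impI)
    fix i assume i: "i < dim_vec u" "i \<notin> J"
    then have "i \<in> K" using u(1) unfolding K_def by auto
    then have "(1\<^sub>m N *\<^sub>v u) $ i = 0"
      using submatrix_rows_mult_vec_eq_0[OF one_carrier_mat K(1) u(1)] Du unfolding D_def by blast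
    then show "u $ i = 0" using u(1) by simp
  qed
  then show thesis using that u(1,2) Wu by blast
qed

lemma pick_image:
  assumes "finite I"
  shows "pick I ` {..<card I} = I"
proof (intro equalityI subsetI)
  fix i assume "i \<in> pick I ` {..<card I}"
  then show "i \<in> I" using pick_in_set_le by auto
next
  fix i assume i: "i \<in> I"
  have "{a \<in> I. a < i} \<subset> I" using i by auto
  then have "card {a \<in> I. a < i} < card I" by (rule psubset_card_mono[OF assms])
  then show "i \<in> pick I ` {..<card I}"
    by (intro rev_image_eqI[of "card {a \<in> I. a < i}"]) (simp_all add: pick_card_in_set[OF i])
qed

lemma col_submatrix_UNIV:
  assumes "j < card {i. i < dim_col P \<and> i \<in> I}"
  shows "col (submatrix P UNIV I) j = col P (pick I j)"
  using assms pick_le[OF assms]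
  by (intro eq_vecI) (auto simp: dim_submatrix submatrix_index pick_UNIV)

lemma set_cols_submatrix_UNIV:
  assumes I: "I \<subseteq> {..<dim_col P}"
  shows "set (cols (submatrix P UNIV I)) = col P ` I"
proof -
  have cI: "{i. i < dim_col P \<and> i \<in> I} = I" using I by auto
  have "set (cols (submatrix P UNIV I)) = col (submatrix P UNIV I) ` {..<card I}"
    by (auto simp: cols_def dim_submatrix cI)
  also have "\<dots> = col P ` pick I ` {..<card I}"
    using col_submatrix_UNIV[of _ P I] cI by (auto simp: image_image)
  also have "\<dots> = col P ` I" using pick_image finite_subset[OF I] by simp
  finally show ?thesis .
qed

lemma mult_submatrix_UNIV:
  assumes M: "M \<in> carrier_mat a b" and A: "A \<in> carrier_mat b c"
  shows "M * submatrix A UNIV I = submatrix (M * A) UNIV I"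
proof (rule eq_matI)
  fix i j assume i: "i < dim_row (submatrix (M * A) UNIV I)"
    and j: "j < dim_col (submatrix (M * A) UNIV I)"
  have jc: "j < card {j. j < dim_col A \<and> j \<in> I}" using j M A by (simp add: dim_submatrix)
  then show "(M * submatrix A UNIV I) $$ (i, j) = submatrix (M * A) UNIV I $$ (i, j)"
    using i M A col_submatrix_UNIV[OF jc] pick_le[OF jc]
    by (simp add: dim_submatrix submatrix_index pick_UNIV)
qed (use M A in \<open>auto simp: dim_submatrix\<close>)

lemma mult_mat_vec_supported_cong:
  assumes M: "M \<in> carrier_mat n N" and P: "P \<in> carrier_mat n N"
    and u: "u \<in> carrier_vec N" "supported_on u I"
    and MP: "\<And>x i. x < n \<Longrightarrow> i < N \<Longrightarrow> i \<in> I \<Longrightarrow> M $$ (x, i) = P $$ (x, i)"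
  shows "M *\<^sub>v u = P *\<^sub>v u"
proof (rule eq_vecI)
  fix x assume "x < dim_vec (P *\<^sub>v u)"
  then have x: "x < n" using P by simp
  have "(M *\<^sub>v u) $ x = (\<Sum>i = 0..<N. M $$ (x, i) * u $ i)"
    using M u x by (auto simp: scalar_prod_def)
  also have "\<dots> = (\<Sum>i = 0..<N. P $$ (x, i) * u $ i)"
    using MP x u unfolding supported_on_def by (intro sum.cong) auto
  also have "\<dots> = (P *\<^sub>v u) $ x"
    using P u x by (auto simp: scalar_prod_def)
  finally show "(M *\<^sub>v u) $ x = (P *\<^sub>v u) $ x" .
qed (use M P in simp)

context vec_space
begin

lemma rank_basis_of_cols:
  assumes M: "M \<in> carrier_mat n nc"
  obtains S where "S \<subseteq> set (cols M)" "lin_indpt S" "card S = rank M" "set (cols M) \<subseteq> span S"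
proof -
  obtain S where max: "maximal S (\<lambda>T. T \<subseteq> set (cols M) \<and> lin_indpt T)"
    using maximal_exists[of "\<lambda>T. T \<subseteq> set (cols M) \<and> lin_indpt T" "card (set (cols M))" "{}"]
    by (meson List.finite_set card_mono empty_iff empty_subsetI finite_lin_indpt2 rev_finite_subset)
  have S: "S \<subseteq> set (cols M)" "lin_indpt S" using max unfolding maximal_def by auto
  have colsC: "set (cols M) \<subseteq> carrier_vec n" using M cols_dim by blast
  have SC: "S \<subseteq> carrier_vec n" using S(1) colsC by blast
  have "c \<in> span S" if c: "c \<in> set (cols M)" for c
  proof (cases "c \<in> S")
    case True
    then show ?thesis using span_mem[OF SC] by simp
  next
    case False
    have "\<not> lin_indpt (insert c S)"
      using max c S(1) False unfolding maximal_def by blast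
    then show ?thesis using lin_dep_iff_in_span[OF SC S(2) _ False] c colsC by auto
  qed
  then show thesis using that[OF S] rank_card_indpt[OF M max] by auto
qed

lemma rank_submatrix_basis:
  assumes P: "P \<in> carrier_mat n N" and I: "I \<subseteq> {..<N}"
  obtains S where "S \<subseteq> col P ` I" "lin_indpt S" "card S = rank (submatrix P UNIV I)"
    "col P ` I \<subseteq> span S"
proof -
  have PI: "submatrix P UNIV I \<in> carrier_mat n (dim_col (submatrix P UNIV I))"
    using P by (intro carrier_matI) (auto simp: dim_submatrix)
  have "set (cols (submatrix P UNIV I)) = col P ` I"
    using set_cols_submatrix_UNIV[of I P] I P by auto
  then show thesis using rank_basis_of_cols[OF PI] that by metis
qed

lemma rank_submatrix_constraints:
  assumes P: "P \<in> carrier_mat n N" and I: "I \<subseteq> {..<N}"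
  obtains W where "W \<in> carrier_mat (rank (submatrix P UNIV I)) N"
    "\<forall>u \<in> carrier_vec N. supported_on u I \<longrightarrow>
       W *\<^sub>v u = 0\<^sub>v (rank (submatrix P UNIV I)) \<longrightarrow> P *\<^sub>v u = 0\<^sub>v n"
proof -
  define t where "t = rank (submatrix P UNIV I)"
  obtain S where S: "S \<subseteq> col P ` I" "lin_indpt S" "card S = t" "col P ` I \<subseteq> span S"
    unfolding t_def by (rule rank_submatrix_basis[OF P I])
  have SC: "S \<subseteq> carrier_vec n" using S(1) col_dim[of P] P by auto
  have finS: "finite S" using S(1) finite_subset[OF I] by (meson finite_imageI finite_subset finite_lessThan)
  obtain bs where bs: "set bs = S" "distinct bs" using finite_distinct_list[OF finS] by blast
  define B where "B = mat_of_cols n bs"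
  have lbs: "length bs = t" using bs S(3) distinct_card by metis
  have B: "B \<in> carrier_mat n t" unfolding B_def using mat_of_cols_carrier(1)[of n bs] lbs by simp
  have colsB: "cols B = bs" unfolding B_def using bs SC by (simp add: cols_mat_of_cols)
  have "\<exists>w \<in> carrier_vec t. col P i = B *\<^sub>v w" if i: "i \<in> I" for i
  proof -
    obtain a where "lincomb a S = col P i"
      using S(4) i finite_in_span[OF finS SC] by blast
    moreover have "B *\<^sub>v vec t (\<lambda>j. a (col B j)) = lincomb a S"
      using mat_mult_eq_lincomb[OF B, of a] colsB bs by simp
    ultimately show ?thesis by (intro bexI[of _ "vec t (\<lambda>j. a (col B j))"]) auto
  qed
  then obtain w where w: "\<And>i. i \<in> I \<Longrightarrow> w i \<in> carrier_vec t \<and> col P i = B *\<^sub>v w i"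
    by metis
  define W where "W = mat t N (\<lambda>(a, i). if i \<in> I then w i $ a else 0)"
  have W: "W \<in> carrier_mat t N" unfolding W_def by simp
  have BW: "(B * W) $$ (x, i) = P $$ (x, i)" if "x < n" "i < N" "i \<in> I" for x i
  proof -
    have wi: "w i \<in> carrier_vec t" using w that by blast
    then have "col W i = w i" using that by (intro eq_vecI) (auto simp: W_def)
    then have "col (B * W) i = col P i" using col_mult2[OF B W] that w by simp
    moreover have "(B * W) $$ (x, i) = col (B * W) i $ x" using that B W by simp
    ultimately show ?thesis using that P by simp
  qed
  show thesis
  proof (intro that[folded t_def, OF W] ballI impI)
    fix u assume u: "u \<in> carrier_vec N" "supported_on u I" and Wu: "W *\<^sub>v u = 0\<^sub>v t"
    have "P *\<^sub>v u = (B * W) *\<^sub>v u"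
      using mult_mat_vec_supported_cong[OF _ P u BW] B W by simp
    also have "\<dots> = B *\<^sub>v (W *\<^sub>v u)" using B W u by simp
    finally show "P *\<^sub>v u = 0\<^sub>v n" using Wu B by auto
  qed
qed

lemma lin_indpt_cols_supported_kernel:
  assumes P: "P \<in> carrier_mat n N" and T: "T \<subseteq> {..<N}"
    and inj: "inj_on (col P) T" and li: "lin_indpt (col P ` T)"
    and u: "u \<in> carrier_vec N" "supported_on u T" and Pu: "P *\<^sub>v u = 0\<^sub>v n"
  shows "u = 0\<^sub>v N"
proof -
  define a where "a v = u $ the_inv_into T (col P) v" for v
  have finT: "finite T" using T finite_subset by blast
  have TC: "col P ` T \<subseteq> carrier_vec n" using P by auto
  have "lincomb a (col P ` T) = P *\<^sub>v u"
  proof (rule eq_vecI)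
    fix x assume "x < dim_vec (P *\<^sub>v u)"
    then have x: "x < n" using P by simp
    have "lincomb a (col P ` T) $ x = (\<Sum>v\<in>col P ` T. a v * v $ x)"
      using lincomb_index[OF x TC] .
    also have "\<dots> = (\<Sum>i\<in>T. P $$ (x, i) * u $ i)"
      using inj T P x by (simp add: sum.reindex a_def the_inv_into_f_f mult.commute subset_iff)
    also have "\<dots> = (\<Sum>i = 0..<N. P $$ (x, i) * u $ i)"
      using T u unfolding supported_on_def by (intro sum.mono_neutral_left) auto
    also have "\<dots> = (P *\<^sub>v u) $ x"
      using P u x by (auto simp: scalar_prod_def)
    finally show "lincomb a (col P ` T) $ x = (P *\<^sub>v u) $ x" .
  qed (use P finT TC in simp)
  then have "a \<in> col P ` T \<rightarrow> {0}"
    using not_lindepD[OF li _ subset_refl, of a] finT Pu by simp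
  then have a0: "a (col P i) = 0" if "i \<in> T" for i using that by blast
  have "u $ i = 0" if "i \<in> T" for i
    using a0[OF that] the_inv_into_f_f[OF inj that] unfolding a_def by simp
  then show ?thesis using u unfolding supported_on_def by (intro eq_vecI) auto
qed

lemma rank_submatrix_injective_subset:
  assumes P: "P \<in> carrier_mat n N" and I: "I \<subseteq> {..<N}" and t: "t \<le> rank (submatrix P UNIV I)"
  obtains T where "T \<subseteq> I" "card T = t"
    "\<forall>u \<in> carrier_vec N. supported_on u T \<longrightarrow> P *\<^sub>v u = 0\<^sub>v n \<longrightarrow> u = 0\<^sub>v N"
proof -
  obtain S where S: "S \<subseteq> col P ` I" "lin_indpt S" "card S = rank (submatrix P UNIV I)"
    "col P ` I \<subseteq> span S"
    by (rule rank_submatrix_basis[OF P I])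
  have "t \<le> card S" using t S(3) by simp
  then obtain S' where S': "S' \<subseteq> S" "card S' = t" "finite S'" by (rule obtain_subset_with_card_n)
  define T where "T = inv_into I (col P) ` S'"
  have S'I: "S' \<subseteq> col P ` I" using S(1) S'(1) by blast
  have TI: "T \<subseteq> I" unfolding T_def using S'I by (auto intro: inv_into_into)
  have colT: "col P ` T = S'" unfolding T_def by (rule image_inv_into_cancel[OF refl S'I])
  have cT: "card T = t"
    unfolding T_def card_image[OF inj_on_inv_into[OF S'I]] by (rule S'(2))
  have finT: "finite T" by (rule finite_subset[OF order.trans[OF TI I]]) simp
  have inj: "inj_on (col P) T"
    by (rule eq_card_imp_inj_on[OF finT]) (simp add: colT cT S'(2))
  have li: "lin_indpt (col P ` T)"
    unfolding colT by (rule subset_li_is_li[OF S(2) S'(1)])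
  show thesis
    using lin_indpt_cols_supported_kernel[OF P order.trans[OF TI I] inj li] by (intro that[OF TI cT]) blast
qed

end

lemma mult_mat_vec_supported_row_supp:
  assumes X: "X \<in> carrier_mat n r" and c: "c \<in> carrier_vec r"
  shows "supported_on (X *\<^sub>v c) (row_supp X)"
  unfolding supported_on_def
proof (intro allI impI)
  fix i assume i: "i < dim_vec (X *\<^sub>v c)" "i \<notin> row_supp X"
  then have "row X i = 0\<^sub>v r" using X unfolding row_supp_def by auto
  then show "(X *\<^sub>v c) $ i = 0" using i X c by simp
qed

lemma row_supp_nonzero_entry:
  assumes X: "X \<in> carrier_mat n r" and i: "i \<in> row_supp X"
  obtains j where "j < r" "X $$ (i, j) \<noteq> 0"
proof -
  have "\<exists>j < r. X $$ (i, j) \<noteq> 0"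
  proof (rule ccontr)
    assume "\<not> ?thesis"
    then have "row X i = 0\<^sub>v r" using X i unfolding row_supp_def by (intro eq_vecI) auto
    then show False using i X unfolding row_supp_def by auto
  qed
  then show thesis using that by blast
qed

lemma mult_mat_vec_index_single:
  assumes X: "X \<in> carrier_mat n r" and c: "c \<in> carrier_vec r" and i: "i < n" and j: "j < r"
    and c0: "\<And>a. a < r \<Longrightarrow> a \<noteq> j \<Longrightarrow> c $ a = 0"
  shows "(X *\<^sub>v c) $ i = X $$ (i, j) * c $ j"
proof -
  have "(X *\<^sub>v c) $ i = (\<Sum>a = 0..<r. X $$ (i, a) * c $ a)"
    using X c i by (simp add: scalar_prod_def)
  also have "\<dots> = (\<Sum>a = 0..<r. if a = j then X $$ (i, a) * c $ a else 0)"
    using c0 by (intro sum.cong) auto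
  also have "\<dots> = X $$ (i, j) * c $ j" using j by simp
  finally show ?thesis .
qed

lemma card_row_supp_ge_of_inj:
  assumes X: "X \<in> carrier_mat n r"
    and X_inj: "\<And>c. c \<in> carrier_vec r \<Longrightarrow> X *\<^sub>v c = 0\<^sub>v n \<Longrightarrow> c = 0\<^sub>v r"
  shows "r \<le> card (row_supp X)"
proof (rule ccontr)
  define S where "S = row_supp X"
  have S: "S \<subseteq> {..<n}" using X unfolding S_def row_supp_def by auto
  assume "\<not> r \<le> card (row_supp X)"
  then have "card S < r" unfolding S_def by simp
  then obtain c where c: "c \<in> carrier_vec r" "c \<noteq> 0\<^sub>v r" "submatrix X S UNIV *\<^sub>v c = 0\<^sub>v (card S)"
    by (rule wide_mat_nonzero_kernel_vec[OF submatrix_rows_carrier[OF X S]])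
  have "X *\<^sub>v c = 0\<^sub>v n"
  proof (rule eq_vecI)
    fix i assume "i < dim_vec (0\<^sub>v n)"
    then have i: "i < n" by simp
    show "(X *\<^sub>v c) $ i = 0\<^sub>v n $ i"
    proof (cases "i \<in> S")
      case True
      then show ?thesis using submatrix_rows_mult_vec_eq_0[OF X S c(1) c(3)] i by simp
    next
      case False
      then show ?thesis
        using mult_mat_vec_supported_row_supp[OF X c(1)] i X unfolding supported_on_def S_def by simp
    qed
  qed (use X in simp)
  then show False using X_inj c(1,2) by blast
qed

lemma normal_equations_solution:
  fixes Y :: "real mat"
  assumes Y: "Y \<in> carrier_mat m r"
    and Y_indep: "\<forall>c \<in> carrier_vec r. Y *\<^sub>v c = 0\<^sub>v m \<longrightarrow> c = 0\<^sub>v r"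
  obtains G where "G \<in> carrier_mat r m" "transpose_mat Y * Y * G = transpose_mat Y"
proof -
  define M where "M = transpose_mat Y * Y"
  have M: "M \<in> carrier_mat r r" unfolding M_def using Y by simp
  have "det M \<noteq> 0"
  proof
    assume "det M = 0"
    then obtain v where v: "v \<in> carrier_vec r" "v \<noteq> 0\<^sub>v r" "M *\<^sub>v v = 0\<^sub>v r"
      using det_0_iff_vec_prod_zero_field[OF M] by auto
    have Yv: "Y *\<^sub>v v \<in> carrier_vec m" using Y v by simp
    have "(Y *\<^sub>v v) \<bullet> (Y *\<^sub>v v) = (transpose_mat Y *\<^sub>v (Y *\<^sub>v v)) \<bullet> v"
      using transpose_vec_mult_scalar[OF Y v(1) Yv] by simp
    also have "\<dots> = (M *\<^sub>v v) \<bullet> v" unfolding M_def using Y v by simp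
    finally have "Y *\<^sub>v v = 0\<^sub>v m" using v(1,3) scalar_prod_self_eq_0_iff[OF Yv] by simp
    then show False using Y_indep v by blast
  qed
  then have "M \<in> Units (ring_mat TYPE(real) r ())" by (rule det_non_zero_imp_unit[OF M])
  then obtain H where H: "H \<in> carrier_mat r r" "M * H = 1\<^sub>m r"
    unfolding Units_def ring_mat_def by auto
  have "M * (H * transpose_mat Y) = transpose_mat Y"
    using assoc_mult_mat[OF M H(1), of "transpose_mat Y" m, symmetric] H(2) Y by simp
  moreover have "transpose_mat Y * Y * (H * transpose_mat Y) = M * (H * transpose_mat Y)"
    unfolding M_def ..
  ultimately show thesis using that[of "H * transpose_mat Y"] H(1) Y by simp
qed

lemma orthogonal_complement_coordinates:
  fixes Y Q :: "real mat"
  assumes Y: "Y \<in> carrier_mat m r"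
    and Y_indep: "\<forall>c \<in> carrier_vec r. Y *\<^sub>v c = 0\<^sub>v m \<longrightarrow> c = 0\<^sub>v r"
    and Q: "Q \<in> carrier_mat m p"
    and Q_span: "{Q *\<^sub>v c | c. c \<in> carrier_vec p} =
                 {v \<in> carrier_vec m. \<forall>d \<in> carrier_vec r. v \<bullet> (Y *\<^sub>v d) = 0}"
  shows "\<And>d. d \<in> carrier_vec r \<Longrightarrow> transpose_mat Q *\<^sub>v (Y *\<^sub>v d) = 0\<^sub>v p"
    and "\<exists>G \<in> carrier_mat r m. \<forall>w \<in> carrier_vec m.
           transpose_mat Q *\<^sub>v w = 0\<^sub>v p \<longrightarrow> w = Y *\<^sub>v (G *\<^sub>v w)"
proof -
  show QY: "transpose_mat Q *\<^sub>v (Y *\<^sub>v d) = 0\<^sub>v p" if d: "d \<in> carrier_vec r" for d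
  proof (rule eq_vecI)
    fix a assume "a < dim_vec (0\<^sub>v p)"
    then have a: "a < p" by simp
    have "Q *\<^sub>v unit_vec p a \<in> {Q *\<^sub>v c | c. c \<in> carrier_vec p}" by auto
    then have "(Q *\<^sub>v unit_vec p a) \<bullet> (Y *\<^sub>v d) = 0" using Q_span d by auto
    moreover have "(transpose_mat Q *\<^sub>v (Y *\<^sub>v d)) \<bullet> unit_vec p a = (Y *\<^sub>v d) \<bullet> (Q *\<^sub>v unit_vec p a)"
      using transpose_vec_mult_scalar[OF Q _, of "unit_vec p a" "Y *\<^sub>v d"] Y d by simp
    ultimately show "(transpose_mat Q *\<^sub>v (Y *\<^sub>v d)) $ a = 0\<^sub>v p $ a"
      using a Q Y d comm_scalar_prod[of "Y *\<^sub>v d" m] by simp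
  qed (use Q in simp)
  obtain G where G: "G \<in> carrier_mat r m" "transpose_mat Y * Y * G = transpose_mat Y"
    using normal_equations_solution[OF Y Y_indep] .
  have "w = Y *\<^sub>v (G *\<^sub>v w)" if w: "w \<in> carrier_vec m" and Qw: "transpose_mat Q *\<^sub>v w = 0\<^sub>v p" for w
  proof -
    define w' where "w' = w - Y *\<^sub>v (G *\<^sub>v w)"
    have GwY: "G *\<^sub>v w \<in> carrier_vec r" "Y *\<^sub>v (G *\<^sub>v w) \<in> carrier_vec m" using G Y w by auto
    have w': "w' \<in> carrier_vec m" unfolding w'_def using w GwY by simp
    have "transpose_mat Y *\<^sub>v w = (transpose_mat Y * Y) *\<^sub>v (G *\<^sub>v w)"
      using assoc_mult_mat_vec[of "transpose_mat Y * Y" r r G m w] G Y w by simp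
    also have "\<dots> = transpose_mat Y *\<^sub>v (Y *\<^sub>v (G *\<^sub>v w))"
      using assoc_mult_mat_vec[of "transpose_mat Y" r m Y r "G *\<^sub>v w"] Y GwY by simp
    finally have "transpose_mat Y *\<^sub>v w' = 0\<^sub>v r"
      unfolding w'_def using Y w GwY by (simp add: mult_minus_distrib_mat_vec)
    then have "\<forall>d \<in> carrier_vec r. w' \<bullet> (Y *\<^sub>v d) = 0"
      using transpose_vec_mult_scalar[OF Y _ w'] by simp
    then obtain c where c: "c \<in> carrier_vec p" "w' = Q *\<^sub>v c" using Q_span w' by blast
    have "transpose_mat Q *\<^sub>v w' = 0\<^sub>v p"
      unfolding w'_def using Qw QY[OF GwY(1)] Q w GwY by (simp add: mult_minus_distrib_mat_vec)
    then have "w' \<bullet> w' = 0"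
      using transpose_vec_mult_scalar[OF Q c(1) w'] c by simp
    then have "w' = 0\<^sub>v m" using scalar_prod_self_eq_0_iff[OF w'] by simp
    then show ?thesis using minus_vec_eq_0_imp_eq[OF w GwY(2)] unfolding w'_def by simp
  qed
  then show "\<exists>G \<in> carrier_mat r m. \<forall>w \<in> carrier_vec m.
           transpose_mat Q *\<^sub>v w = 0\<^sub>v p \<longrightarrow> w = Y *\<^sub>v (G *\<^sub>v w)"
    using G(1) by blast
qed

lemma Min_image_unique_argmin:
  fixes f :: "'a \<Rightarrow> 'b :: linorder"
  assumes C: "finite C" and S: "S \<in> C" and less: "\<And>I. I \<in> C \<Longrightarrow> I \<noteq> S \<Longrightarrow> f S < f I"
  shows "Min (f ` C) = f S" and "{I \<in> C. f I = Min (f ` C)} = {S}"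
proof -
  have "f S \<le> f I" if "I \<in> C" for I
    using less[OF that] by (cases "I = S") auto
  then show Min: "Min (f ` C) = f S"
    using C S by (intro Min_eqI) auto
  show "{I \<in> C. f I = Min (f ` C)} = {S}"
    unfolding Min using S less by fastforce
qed

text \<open>
  \<open>P\<close> stands for \<open>Q\<^sup>T A\<close>, and \<open>C u\<close> for the coordinates of \<open>A u\<close> with respect to the
  columns of \<open>Y = A X\<close> whenever \<open>P u = 0\<close>: \<open>C = G A\<close> for a left inverse \<open>G\<close> of \<open>Y\<close> on
  its range.
\<close>

locale sparse_support_rank =
  fixes A X P C :: "real mat" and m n r p k :: nat
  assumes A_carrier: "A \<in> carrier_mat m n"
    and X_carrier: "X \<in> carrier_mat n r"
    and P_carrier: "P \<in> carrier_mat p n"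
    and C_carrier: "C \<in> carrier_mat r n"
    and card_row_supp: "card (row_supp X) = k"
    and X_inj: "\<And>c. c \<in> carrier_vec r \<Longrightarrow> X *\<^sub>v c = 0\<^sub>v n \<Longrightarrow> c = 0\<^sub>v r"
    and P_mult_X_eq_0: "\<And>c. c \<in> carrier_vec r \<Longrightarrow> P *\<^sub>v (X *\<^sub>v c) = 0\<^sub>v p"
    and P_kernel_coordinates: "\<And>u. u \<in> carrier_vec n \<Longrightarrow> P *\<^sub>v u = 0\<^sub>v p \<Longrightarrow> A *\<^sub>v u = A *\<^sub>v (X *\<^sub>v (C *\<^sub>v u))"
    and sparse_kernel: "\<And>z. z \<in> carrier_vec n \<Longrightarrow> A *\<^sub>v z = 0\<^sub>v m \<Longrightarrow> vec_nnz z \<le> 2 * k - r + 1 \<Longrightarrow>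
         z = 0\<^sub>v n"
begin

abbreviation S :: "nat set" where "S \<equiv> row_supp X"

lemma S_subset: "S \<subseteq> {..<n}"
  using X_carrier unfolding row_supp_def by auto

lemma finite_S: "finite S"
  using S_subset finite_subset by blast

lemma r_le_k: "r \<le> k"
  using card_row_supp_ge_of_inj[OF X_carrier X_inj] card_row_supp by simp

lemma X_mult_supported: "c \<in> carrier_vec r \<Longrightarrow> supported_on (X *\<^sub>v c) S"
  by (rule mult_mat_vec_supported_row_supp[OF X_carrier])

lemma sparse_eq:
  assumes u: "u \<in> carrier_vec n" "supported_on u K" and v: "v \<in> carrier_vec n" "supported_on v K"
    and K: "finite K" "card K \<le> 2 * k - r + 1" and Auv: "A *\<^sub>v u = A *\<^sub>v v"
  shows "u = v"
proof -
  have "A *\<^sub>v (u - v) = 0\<^sub>v m"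
    using Auv A_carrier u v by (simp add: mult_minus_distrib_mat_vec)
  moreover have "vec_nnz (u - v) \<le> 2 * k - r + 1"
    using vec_nnz_le_card_support[OF supported_on_minus[OF u(1) v(1) u(2) v(2)]] K by simp
  ultimately have "u - v = 0\<^sub>v n" using sparse_kernel u v by simp
  then show ?thesis using minus_vec_eq_0_imp_eq u(1) v(1) by blast
qed

lemma eq_X_coordinates:
  assumes u: "u \<in> carrier_vec n" "supported_on u K" and Pu: "P *\<^sub>v u = 0\<^sub>v p"
    and XCu: "supported_on (X *\<^sub>v (C *\<^sub>v u)) K"
    and K: "finite K" "card K \<le> 2 * k - r + 1"
  shows "u = X *\<^sub>v (C *\<^sub>v u)"
  using sparse_eq[OF u _ XCu K P_kernel_coordinates[OF u(1) Pu]] X_carrier C_carrier u(1) by simp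

lemma low_rank_nonzero_kernel_vec:
  assumes J: "J \<subseteq> I" and I: "I \<subseteq> {..<n}" and V: "V \<in> carrier_mat q n"
    and lt: "vec_space.rank p (submatrix P UNIV I) + q < card J"
  obtains u where "u \<in> carrier_vec n" "u \<noteq> 0\<^sub>v n" "supported_on u J" "P *\<^sub>v u = 0\<^sub>v p"
    "V *\<^sub>v u = 0\<^sub>v q"
proof -
  define t where "t = vec_space.rank p (submatrix P UNIV I)"
  obtain W where W: "W \<in> carrier_mat t n"
    and WP: "\<forall>u \<in> carrier_vec n. supported_on u I \<longrightarrow> W *\<^sub>v u = 0\<^sub>v t \<longrightarrow> P *\<^sub>v u = 0\<^sub>v p"
    unfolding t_def by (rule vec_space.rank_submatrix_constraints[OF P_carrier I])
  obtain u where u: "u \<in> carrier_vec n" "u \<noteq> 0\<^sub>v n" "supported_on u J" "(W @\<^sub>r V) *\<^sub>v u = 0\<^sub>v (t + q)"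
    using lt unfolding t_def[symmetric]
    by (rule wide_mat_nonzero_supported_kernel_vec[OF carrier_append_rows[OF W V] order.trans[OF J I]])
  then have "W *\<^sub>v u = 0\<^sub>v t" "V *\<^sub>v u = 0\<^sub>v q"
    using mult_append_rows_eq_0_iff[OF W V u(1)] by auto
  then show thesis using that u(1-3) WP supported_on_mono[OF u(3) J] by blast
qed

lemma rank_ge_card_minus_r:
  assumes J: "J \<subseteq> I" and I: "I \<subseteq> {..<n}" and cJ: "card J \<le> 2 * k - r + 1"
  shows "card J - r \<le> vec_space.rank p (submatrix P UNIV I)"
proof (rule ccontr)
  assume contra: "\<not> ?thesis"
  obtain u where u: "u \<in> carrier_vec n" "u \<noteq> 0\<^sub>v n" "supported_on u J" "P *\<^sub>v u = 0\<^sub>v p"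
    and Cu: "C *\<^sub>v u = 0\<^sub>v r"
  proof (rule low_rank_nonzero_kernel_vec[OF J I C_carrier])
    show "vec_space.rank p (submatrix P UNIV I) + r < card J" using contra by simp
  qed
  have finJ: "finite J" using finite_subset[OF order.trans[OF J I]] by simp
  have "supported_on (X *\<^sub>v (C *\<^sub>v u)) J"
    using Cu X_carrier unfolding supported_on_def by auto
  then have "u = X *\<^sub>v (C *\<^sub>v u)" using eq_X_coordinates[OF u(1,3,4) _ finJ cJ] by blast
  then show False using u(2) Cu X_carrier by auto
qed

lemma rank_S_ge: "k - r \<le> vec_space.rank p (submatrix P UNIV S)"
  using rank_ge_card_minus_r[OF subset_refl S_subset] card_row_supp r_le_k by simp

lemma rank_S_le: "vec_space.rank p (submatrix P UNIV S) \<le> k - r"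
proof (rule ccontr)
  assume "\<not> ?thesis"
  then have "k - r + 1 \<le> vec_space.rank p (submatrix P UNIV S)" by simp
  then obtain T where T: "T \<subseteq> S" "card T = k - r + 1"
    and P_inj: "\<forall>u \<in> carrier_vec n. supported_on u T \<longrightarrow> P *\<^sub>v u = 0\<^sub>v p \<longrightarrow> u = 0\<^sub>v n"
    by (rule vec_space.rank_submatrix_injective_subset[OF P_carrier S_subset])
  have "card T \<le> k" using card_mono[OF finite_S T(1)] card_row_supp by simp
  then have r1: "1 \<le> r" using T(2) r_le_k by simp
  have ST: "S - T \<subseteq> {..<n}" "card (S - T) < r"
    using S_subset card_Diff_subset[OF finite_subset[OF T(1) finite_S] T(1)] T(2) card_row_supp r_le_k r1
    by auto
  obtain c where c: "c \<in> carrier_vec r" "c \<noteq> 0\<^sub>v r" "submatrix X (S - T) UNIV *\<^sub>v c = 0\<^sub>v (card (S - T))"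
    by (rule wide_mat_nonzero_kernel_vec[OF submatrix_rows_carrier[OF X_carrier ST(1)] ST(2)])
  have "supported_on (X *\<^sub>v c) (S - (S - T))"
    using supported_on_Diff[OF X_mult_supported[OF c(1)]] submatrix_rows_mult_vec_eq_0[OF X_carrier ST(1) c(1,3)]
    by blast
  then have "supported_on (X *\<^sub>v c) T" by (rule supported_on_mono) blast
  then have "X *\<^sub>v c = 0\<^sub>v n" using P_inj P_mult_X_eq_0[OF c(1)] X_carrier c(1) by simp
  then show False using X_inj c(1,2) by blast
qed

lemma rank_S: "vec_space.rank p (submatrix P UNIV S) = k - r"
  using rank_S_ge rank_S_le by simp

lemma rank_gt_of_proper_superset:
  assumes SI: "S \<subset> I" and I: "I \<subseteq> {..<n}"
  shows "k - r < vec_space.rank p (submatrix P UNIV I)"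
proof -
  obtain i where i: "i \<in> I" "i \<notin> S" using SI by blast
  have iS: "insert i S \<subseteq> I" using SI i by blast
  have card_iS: "card (insert i S) = k + 1" using finite_S i card_row_supp by simp
  then have "card (insert i S) \<le> 2 * k - r + 1" using r_le_k by simp
  then have "card (insert i S) - r \<le> vec_space.rank p (submatrix P UNIV I)"
    by (rule rank_ge_card_minus_r[OF iS I])
  then show ?thesis using card_iS r_le_k by simp
qed

text \<open>
  When \<open>J\<close> misses part of the support, \<open>r - 1\<close> extra linear conditions are imposed on
  \<open>c = C u\<close>.  If \<open>S \<inter> J\<close> is small they make \<open>X c\<close> vanish on some \<open>F \<supseteq> S \<inter> J\<close> with
  \<open>|F| = r - 1\<close>, so \<open>u = X c\<close> is supported on \<open>J \<inter> (S - F) = {}\<close>.  If \<open>S \<inter> J\<close> is large,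
  \<open>J \<union> S\<close> is already sparse enough and the conditions pin \<open>c\<close> to a single coordinate \<open>j0\<close>,
  which is detected by the row \<open>i0 \<in> S - J\<close> of \<open>X\<close>.
\<close>

lemma rank_gt_of_small_overlap:
  assumes J: "J \<subseteq> I" and I: "I \<subseteq> {..<n}" and cJ: "card J = k" and small: "card (S \<inter> J) < r"
  shows "k - r < vec_space.rank p (submatrix P UNIV I)"
proof (rule ccontr)
  assume contra: "\<not> ?thesis"
  have finJ: "finite J" using finite_subset[OF order.trans[OF J I]] by simp
  have "card (S - J) = k - card (S \<inter> J)"
    using card_Diff_subset_Int[of S J] finite_S card_row_supp by (simp add: Int_commute Diff_Int2)
  then have "r - 1 - card (S \<inter> J) \<le> card (S - J)" using r_le_k by simp
  then obtain D where D: "D \<subseteq> S - J" "card D = r - 1 - card (S \<inter> J)" "finite D"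
    by (rule obtain_subset_with_card_n)
  define F where "F = (S \<inter> J) \<union> D"
  have F: "F \<subseteq> S" "S \<inter> J \<subseteq> F" "F \<subseteq> {..<n}" using D S_subset unfolding F_def by auto
  have cF: "card F = r - 1"
    unfolding F_def using card_Un_disjoint[of "S \<inter> J" D] D finite_S small by auto
  have XC: "X * C \<in> carrier_mat n n" using X_carrier C_carrier by simp
  obtain u where u: "u \<in> carrier_vec n" "u \<noteq> 0\<^sub>v n" "supported_on u J" "P *\<^sub>v u = 0\<^sub>v p"
    and Vu: "submatrix (X * C) F UNIV *\<^sub>v u = 0\<^sub>v (card F)"
  proof (rule low_rank_nonzero_kernel_vec[OF J I submatrix_rows_carrier[OF XC F(3)]])
    show "vec_space.rank p (submatrix P UNIV I) + card F < card J"
      using contra cF cJ small r_le_k by linarith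
  qed
  have "(X *\<^sub>v (C *\<^sub>v u)) $ a = 0" if "a \<in> F" for a
    using submatrix_rows_mult_vec_eq_0[OF XC F(3) u(1) Vu that] X_carrier C_carrier u(1) by simp
  then have XCu: "supported_on (X *\<^sub>v (C *\<^sub>v u)) (S - F)"
    using supported_on_Diff[OF X_mult_supported] C_carrier u(1) by simp
  have "card (J \<union> (S - F)) \<le> 2 * k - r + 1"
    using card_Un_le[of J "S - F"] card_Diff_subset[OF finite_subset[OF F(1) finite_S] F(1)]
      cF cJ card_row_supp r_le_k small by linarith
  then have "u = X *\<^sub>v (C *\<^sub>v u)"
    using eq_X_coordinates[OF u(1) _ u(4) _ _] supported_on_mono[OF u(3)] supported_on_mono[OF XCu]
      finJ finite_S by (meson Un_upper1 Un_upper2 finite_Diff finite_UnI)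
  then have "supported_on u (J \<inter> (S - F))" using supported_on_Int[OF u(3)] XCu by simp
  moreover have "J \<inter> (S - F) = {}" using F(2) by blast
  ultimately show False using supported_on_empty[OF u(1)] u(2) by simp
qed

lemma rank_gt_of_large_overlap:
  assumes J: "J \<subseteq> I" and I: "I \<subseteq> {..<n}" and cJ: "card J = k"
    and i0: "i0 \<in> S" "i0 \<notin> J" and large: "r \<le> card (S \<inter> J)"
  shows "k - r < vec_space.rank p (submatrix P UNIV I)"
proof (rule ccontr)
  assume contra: "\<not> ?thesis"
  have finJ: "finite J" using finite_subset[OF order.trans[OF J I]] by simp
  have i0n: "i0 < n" using i0 S_subset by auto
  obtain j0 where j0: "j0 < r" "X $$ (i0, j0) \<noteq> 0"
    by (rule row_supp_nonzero_entry[OF X_carrier i0(1)])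
  define F where "F = {..<r} - {j0}"
  have F: "F \<subseteq> {..<r}" "card F = r - 1" unfolding F_def using j0 by auto
  obtain u where u: "u \<in> carrier_vec n" "u \<noteq> 0\<^sub>v n" "supported_on u J" "P *\<^sub>v u = 0\<^sub>v p"
    and Vu: "submatrix C F UNIV *\<^sub>v u = 0\<^sub>v (card F)"
  proof (rule low_rank_nonzero_kernel_vec[OF J I submatrix_rows_carrier[OF C_carrier F(1)]])
    show "vec_space.rank p (submatrix P UNIV I) + card F < card J"
      using contra F(2) cJ j0(1) r_le_k by linarith
  qed
  define c where "c = C *\<^sub>v u"
  have c: "c \<in> carrier_vec r" unfolding c_def using C_carrier u(1) by simp
  have c_F: "c $ a = 0" if "a \<in> F" for a
    unfolding c_def by (rule submatrix_rows_mult_vec_eq_0[OF C_carrier F(1) u(1) Vu that])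
  have "card (J \<union> S) \<le> 2 * k - r + 1"
    using card_Un_Int[OF finJ finite_S] cJ card_row_supp large by (simp add: Int_commute)
  then have u_eq: "u = X *\<^sub>v c"
    using eq_X_coordinates[OF u(1) _ u(4)] supported_on_mono[OF u(3)] supported_on_mono[OF X_mult_supported[OF c]]
      finJ finite_S unfolding c_def by (meson Un_upper1 Un_upper2 finite_UnI)
  have "(X *\<^sub>v c) $ i0 = X $$ (i0, j0) * c $ j0"
    using mult_mat_vec_index_single[OF X_carrier c i0n j0(1)] c_F unfolding F_def by simp
  moreover have "u $ i0 = 0" using u(1,3) i0 i0n unfolding supported_on_def by auto
  ultimately have "X $$ (i0, j0) * c $ j0 = 0" using u_eq by simp
  then have "c = 0\<^sub>v r"
    using j0(2) c_F c unfolding F_def by (intro eq_vecI) auto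
  then show False using u_eq u(2) X_carrier by auto
qed

lemma rank_gt_of_ne_S:
  assumes I: "I \<subseteq> {..<n}" and cI: "k \<le> card I" and ne: "I \<noteq> S"
  shows "k - r < vec_space.rank p (submatrix P UNIV I)"
proof (cases "S \<subseteq> I")
  case True
  then show ?thesis using rank_gt_of_proper_superset[OF _ I] ne by blast
next
  case False
  obtain J where J: "J \<subseteq> I" "card J = k" "finite J" using cI by (rule obtain_subset_with_card_n)
  show ?thesis
  proof (cases "card (S \<inter> J) < r")
    case True
    then show ?thesis by (rule rank_gt_of_small_overlap[OF J(1) I J(2)])
  next
    case large: False
    obtain i0 where "i0 \<in> S" "i0 \<notin> J" using False J(1) by blast
    then show ?thesis using rank_gt_of_large_overlap[OF J(1) I J(2)] large by simp
  qed
qed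

lemma rank_minimum:
  shows "Min {vec_space.rank p (submatrix P UNIV I) | I. I \<subseteq> {0..<n} \<and> k \<le> card I} = k - r"
    and "{I. I \<subseteq> {0..<n} \<and> k \<le> card I \<and> vec_space.rank p (submatrix P UNIV I) =
            Min {vec_space.rank p (submatrix P UNIV J) | J. J \<subseteq> {0..<n} \<and> k \<le> card J}} = {S}"
proof -
  define R where "R I = vec_space.rank p (submatrix P UNIV I)" for I
  define Cands where "Cands = {I. I \<subseteq> {0..<n} \<and> k \<le> card I}"
  have fin: "finite Cands" by (rule finite_subset[of _ "Pow {0..<n}"]) (auto simp: Cands_def)
  have supp: "S \<in> Cands" using S_subset card_row_supp by (auto simp: Cands_def)
  have less: "R S < R I" if "I \<in> Cands" "I \<noteq> S" for I
  proof -
    have "I \<subseteq> {..<n}" "k \<le> card I" using that(1) unfolding Cands_def by auto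
    then show ?thesis using rank_gt_of_ne_S that(2) rank_S unfolding R_def by simp
  qed
  have "{R I | I. I \<subseteq> {0..<n} \<and> k \<le> card I} = R ` Cands" by (auto simp: Cands_def)
  then show "Min {R I | I. I \<subseteq> {0..<n} \<and> k \<le> card I} = k - r"
    and "{I. I \<subseteq> {0..<n} \<and> k \<le> card I \<and> R I = Min {R J | J. J \<subseteq> {0..<n} \<and> k \<le> card J}} = {S}"
    using Min_image_unique_argmin[of Cands S R, OF fin supp less] rank_S
    unfolding R_def Cands_def by auto
qed

end

lemma sparse_support_rank_transpose_mult:
  fixes A X Y Q :: "real mat" and m n r k p :: nat and \<delta> :: real
  assumes A: "A \<in> carrier_mat m n"
    and X: "X \<in> carrier_mat n r"
    and Y: "Y \<in> carrier_mat m r"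
    and AXY: "A * X = Y"
    and k: "card (row_supp X) = k"
    and Y_indep: "\<forall>c \<in> carrier_vec r. Y *\<^sub>v c = 0\<^sub>v m \<longrightarrow> c = 0\<^sub>v r"
    and Q: "Q \<in> carrier_mat m p"
    and Q_span: "{Q *\<^sub>v c | c. c \<in> carrier_vec p} =
                 {v \<in> carrier_vec m. \<forall>d \<in> carrier_vec r. v \<bullet> (Y *\<^sub>v d) = 0}"
    and RIP: "left_RIP A (2 * k - r + 1) \<delta>"
  obtains G where "sparse_support_rank A X (transpose_mat Q * A) (G * A) m n r p k"
proof -
  obtain G where G: "G \<in> carrier_mat r m"
    and G_coord: "\<forall>w \<in> carrier_vec m. transpose_mat Q *\<^sub>v w = 0\<^sub>v p \<longrightarrow> w = Y *\<^sub>v (G *\<^sub>v w)"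
    using orthogonal_complement_coordinates(2)[OF Y Y_indep Q Q_span] by blast
  have AX: "A *\<^sub>v (X *\<^sub>v c) = Y *\<^sub>v c" if "c \<in> carrier_vec r" for c
    using AXY A X that by (metis assoc_mult_mat_vec)
  have "sparse_support_rank A X (transpose_mat Q * A) (G * A) m n r p k"
  proof
    show "c = 0\<^sub>v r" if "c \<in> carrier_vec r" "X *\<^sub>v c = 0\<^sub>v n" for c
    proof -
      have "Y *\<^sub>v c = 0\<^sub>v m" using AX[OF that(1)] that(2) A by auto
      then show ?thesis using Y_indep that(1) by blast
    qed
    show "(transpose_mat Q * A) *\<^sub>v (X *\<^sub>v c) = 0\<^sub>v p" if "c \<in> carrier_vec r" for c
      using orthogonal_complement_coordinates(1)[OF Y Y_indep Q Q_span that] AX[OF that] Q A X that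
      by simp
    show "A *\<^sub>v u = A *\<^sub>v (X *\<^sub>v ((G * A) *\<^sub>v u))"
      if "u \<in> carrier_vec n" "(transpose_mat Q * A) *\<^sub>v u = 0\<^sub>v p" for u
      using G_coord AX[of "G *\<^sub>v (A *\<^sub>v u)"] that Q A G by simp
    show "z = 0\<^sub>v n" if "z \<in> carrier_vec n" "A *\<^sub>v z = 0\<^sub>v m" "vec_nnz z \<le> 2 * k - r + 1" for z
      using left_RIP_sparse_kernel[OF RIP] that A by auto
  qed (use A X Q G k in auto)
  then show thesis by (rule that)
qed

theorem theorem1:
  fixes A X Y Q :: "real mat" and m n r k p :: nat and \<delta> :: real
  assumes A: "A \<in> carrier_mat m n"
    and X: "X \<in> carrier_mat n r"
    and Y: "Y \<in> carrier_mat m r"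
    and AXY: "A * X = Y"
    and k: "card (row_supp X) = k"
    and Y_indep: "\<forall>c \<in> carrier_vec r. Y *\<^sub>v c = 0\<^sub>v m \<longrightarrow> c = 0\<^sub>v r"
    and Q: "Q \<in> carrier_mat m p"
    and Q_indep: "\<forall>c \<in> carrier_vec p. Q *\<^sub>v c = 0\<^sub>v m \<longrightarrow> c = 0\<^sub>v p"
    and Q_span: "{Q *\<^sub>v c | c. c \<in> carrier_vec p} =
                 {v \<in> carrier_vec m. \<forall>d \<in> carrier_vec r. v \<bullet> (Y *\<^sub>v d) = 0}"
    and RIP: "left_RIP A (2 * k - r + 1) \<delta>"
  shows "int k - int r =
           int (Min {vec_space.rank p (transpose_mat Q * cols_sub A I) | I.
                      I \<subseteq> {0..<n} \<and> card I \<ge> k}) \<and>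
         {I. I \<subseteq> {0..<n} \<and> card I \<ge> k \<and>
            vec_space.rank p (transpose_mat Q * cols_sub A I) =
              Min {vec_space.rank p (transpose_mat Q * cols_sub A J) | J.
                      J \<subseteq> {0..<n} \<and> card J \<ge> k}} = {row_supp X}"
proof -
  \<comment> \<open>Only the span of the columns of \<open>Q\<close> matters.\<close>
  obtain G where "sparse_support_rank A X (transpose_mat Q * A) (G * A) m n r p k"
    by (rule sparse_support_rank_transpose_mult[OF A X Y AXY k Y_indep Q Q_span RIP])
  then interpret sparse_support_rank A X "transpose_mat Q * A" "G * A" m n r p k .
  have "transpose_mat Q * cols_sub A I = submatrix (transpose_mat Q * A) UNIV I" for I
    unfolding cols_sub_def using mult_submatrix_UNIV[OF _ A] Q by simp
  then show ?thesis using rank_minimum r_le_k by simp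
qed

end
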